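(* Let $\alpha\in(0,\tfrac12)$, $K>0$, $N\in\mathbb N$, and consider initial phases $\theta^N_{1,0},\dots,\theta^N_{N,0}$ and natural frequencies $\Omega^N_1,\dots,\Omega^N_N$. Let $\Theta^N(t)=(\theta^N_1(t),\dots,\theta^N_N(t))$ be the unique global-in-time classical solution of $\dot\theta_i=\Omega^N_i+\frac KN\sum_{j=1}^Nh(\theta_j-\theta_i)$, $\theta_i(0)=\theta^N_{i,0}$, and let $\mu^N_t=\frac1N\sum_{i=1}^N\delta_{e^{i\theta^N_i(t)}}(z)\otimes\delta_{\Omega^N_i}(\Omega)$. Then $\mu^N\in\mathcal{AC}_{\mathcal M}\cap\mathcal T_{\mathcal M}$ is a weak measure-valued solution of $\partial_t f+\mathrm{div}_{(z,\Omega)}(\mathcal V[f]f)=0$ with initial datum $\mu^N_0$, and $$\Big|\frac{d}{dt}\int_{\mathbb T\times\mathbb R}\varphi\,d\mu^N_t\Big|\le\Big(\frac1N\sum_{i=1}^N|\Omega^N_i|+K\|h\|_{C(\mathbb T)}\Big)\|\nabla\varphi\|_{C_0(\mathbb T\times\mathbb R)}$$ for every $t\ge0$ and every $\varphi\in C^1_0(\mathbb T\times\mathbb R)$.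
   Context: $\mathbb T$ is the unit circle identified with $(-\pi,\pi]$ via $z=e^{i\theta}$; $|\theta|_o$ = absolute value of the representative of $\theta$ mod $2\pi$ in $(-\pi,\pi]$. Kernel $h(\theta)=\sin\theta/|\theta|_o^{2\alpha}$ ($\theta\notin2\pi\mathbb Z$), $h=0$ on $2\pi\mathbb Z$; $\|h\|_{C(\mathbb T)}$ is its sup norm. $\mathcal P[\mu](\theta,\Omega)=\Omega-K\int h(\theta-\theta')\,d\mu(\theta',\Omega')$, $\mathcal V[\mu](z,\Omega)=(\mathcal P[\mu](z,\Omega)\,iz,0)$. $\mathcal{AC}_{\mathcal M}$: bounded measure-valued $t\mapsto\mu_t$ with $t\mapsto\int\varphi\,d\mu_t$ absolutely continuous for $\varphi\in C_c^\infty(\mathbb T\times\mathbb R)$; $\mathcal T_{\mathcal M}$: uniformly tight families. A weak measure-valued solution is a weak-* continuous bounded $f$ with $\int_0^T\!\int\partial_t\varphi\,df_t\,dt+\int_0^T\!\int\langle\mathcal V[f_t],\nabla_{(z,\Omega)}\varphi\rangle\,df_t\,dt=-\int\varphi(0,\cdot)\,df_0$ for all $\varphi\in C^1_c([0,T)\times\mathbb T\times\mathbb R)$. $C^1_0$ denotes $C^1$ functions which, together with their gradient, vanish at infinity; $\|\nabla\varphi\|_{C_0}$ is the sup norm of the Riemannian gradient. *)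

theory Defs
  imports "HOL-Analysis.Analysis"
begin

(* Angle coordinates: the circle T is identified with (-pi,pi] via z = exp(i theta).
   A point of T x R is represented by (theta, Omega) :: real * real.  Measures on T x R
   are Borel measures on real * real concentrated on (-pi,pi] x R; functions on T x R
   are functions on real * real that are 2pi-periodic in theta. *)

definition ang_rep :: "real \<Rightarrow> real" where
  "ang_rep \<theta> = \<theta> - 2 * pi * of_int \<lceil>(\<theta> - pi) / (2 * pi)\<rceil>"

definition ang_abs :: "real \<Rightarrow> real" where
  "ang_abs \<theta> = \<bar>ang_rep \<theta>\<bar>"

definition hker :: "real \<Rightarrow> real \<Rightarrow> real" where
  "hker \<alpha> \<theta> = (if ang_rep \<theta> = 0 then 0 else sin \<theta> / (ang_abs \<theta> powr (2 * \<alpha>)))"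

definition hnorm :: "real \<Rightarrow> real" where
  "hnorm \<alpha> = (SUP \<theta>. \<bar>hker \<alpha> \<theta>\<bar>)"

definition torus_set :: "(real \<times> real) set" where
  "torus_set = {-pi<..pi} \<times> UNIV"

definition periodic_fn :: "(real \<times> real \<Rightarrow> real) \<Rightarrow> bool" where
  "periodic_fn \<phi> \<longleftrightarrow> (\<forall>\<theta> \<Omega>. \<phi> (\<theta> + 2 * pi, \<Omega>) = \<phi> (\<theta>, \<Omega>))"

definition C1_with :: "(real \<times> real \<Rightarrow> real) \<Rightarrow> (real \<times> real \<Rightarrow> real) \<Rightarrow> (real \<times> real \<Rightarrow> real) \<Rightarrow> bool" where
  "C1_with \<phi> \<phi>\<theta> \<phi>\<Omega> \<longleftrightarrow>
     (\<forall>x. (\<phi> has_derivative (\<lambda>(a, b). \<phi>\<theta> x * a + \<phi>\<Omega> x * b)) (at x)) \<and>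
     continuous_on UNIV \<phi>\<theta> \<and> continuous_on UNIV \<phi>\<Omega>"

(* C^infinity functions of two real variables *)
coinductive smooth2 :: "(real \<times> real \<Rightarrow> real) \<Rightarrow> bool" where
  "(\<And>x. (\<phi> has_derivative (\<lambda>(a, b). \<phi>\<theta> x * a + \<phi>\<Omega> x * b)) (at x))
    \<Longrightarrow> smooth2 \<phi>\<theta> \<Longrightarrow> smooth2 \<phi>\<Omega> \<Longrightarrow> smooth2 \<phi>"

definition Cc_inf :: "(real \<times> real \<Rightarrow> real) \<Rightarrow> bool" where
  "Cc_inf \<phi> \<longleftrightarrow> smooth2 \<phi> \<and> periodic_fn \<phi> \<and>
     (\<exists>R. \<forall>\<theta> \<Omega>. \<bar>\<Omega>\<bar> \<ge> R \<longrightarrow> \<phi> (\<theta>, \<Omega>) = 0)"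

definition vanish_inf :: "(real \<times> real \<Rightarrow> real) \<Rightarrow> bool" where
  "vanish_inf \<phi> \<longleftrightarrow> (\<forall>\<epsilon>>0. \<exists>R. \<forall>\<theta> \<Omega>. \<bar>\<Omega>\<bar> \<ge> R \<longrightarrow> \<bar>\<phi> (\<theta>, \<Omega>)\<bar> \<le> \<epsilon>)"

definition C0_fn :: "(real \<times> real \<Rightarrow> real) \<Rightarrow> bool" where
  "C0_fn \<phi> \<longleftrightarrow> continuous_on UNIV \<phi> \<and> periodic_fn \<phi> \<and> vanish_inf \<phi>"

(* C^1_0(T x R), with its partial derivatives (the Riemannian gradient in angle coordinates
   is (phi_theta, phi_Omega), since |iz| = 1) *)
definition C10_with :: "(real \<times> real \<Rightarrow> real) \<Rightarrow> (real \<times> real \<Rightarrow> real) \<Rightarrow> (real \<times> real \<Rightarrow> real) \<Rightarrow> bool" where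
  "C10_with \<phi> \<phi>\<theta> \<phi>\<Omega> \<longleftrightarrow> C1_with \<phi> \<phi>\<theta> \<phi>\<Omega> \<and> periodic_fn \<phi> \<and>
     vanish_inf \<phi> \<and> vanish_inf \<phi>\<theta> \<and> vanish_inf \<phi>\<Omega>"

definition grad_norm :: "(real \<times> real \<Rightarrow> real) \<Rightarrow> (real \<times> real \<Rightarrow> real) \<Rightarrow> real" where
  "grad_norm \<phi>\<theta> \<phi>\<Omega> = (SUP x. sqrt ((\<phi>\<theta> x)\<^sup>2 + (\<phi>\<Omega> x)\<^sup>2))"

definition bounded_mvalued :: "(real \<Rightarrow> (real \<times> real) measure) \<Rightarrow> bool" where
  "bounded_mvalued \<mu> \<longleftrightarrow>
     (\<forall>t\<ge>0. sets (\<mu> t) = sets borel \<and> finite_measure (\<mu> t) \<and>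
              emeasure (\<mu> t) (UNIV - torus_set) = 0) \<and>
     (\<exists>M. \<forall>t\<ge>0. measure (\<mu> t) UNIV \<le> M)"

definition abs_cont_on :: "real \<Rightarrow> real \<Rightarrow> (real \<Rightarrow> real) \<Rightarrow> bool" where
  "abs_cont_on a b F \<longleftrightarrow>
     (\<forall>\<epsilon>>0. \<exists>\<delta>>0. \<forall>(n::nat) s u.
        (\<forall>k<n. a \<le> s k \<and> s k \<le> u k \<and> u k \<le> b) \<and>
        (\<forall>k<n. \<forall>l<n. k \<noteq> l \<longrightarrow> u k \<le> s l \<or> u l \<le> s k) \<and>
        (\<Sum>k<n. u k - s k) < \<delta> \<longrightarrow> (\<Sum>k<n. \<bar>F (u k) - F (s k)\<bar>) < \<epsilon>)"

definition AC_M :: "(real \<Rightarrow> (real \<times> real) measure) \<Rightarrow> bool" where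
  "AC_M \<mu> \<longleftrightarrow> bounded_mvalued \<mu> \<and>
     (\<forall>\<phi>. Cc_inf \<phi> \<longrightarrow> (\<forall>T\<ge>0. abs_cont_on 0 T (\<lambda>t. \<integral>x. \<phi> x \<partial>\<mu> t)))"

definition T_M :: "(real \<Rightarrow> (real \<times> real) measure) \<Rightarrow> bool" where
  "T_M \<mu> \<longleftrightarrow> (\<forall>\<epsilon>>0. \<exists>C. compact C \<and> (\<forall>t\<ge>0. measure (\<mu> t) (UNIV - C) \<le> \<epsilon>))"

definition Pfield :: "real \<Rightarrow> real \<Rightarrow> (real \<times> real) measure \<Rightarrow> real \<times> real \<Rightarrow> real" where
  "Pfield \<alpha> K m x = snd x - K * (\<integral>y. hker \<alpha> (fst x - fst y) \<partial>m)"

definition test_fn :: "real \<Rightarrow> (real \<Rightarrow> real \<times> real \<Rightarrow> real) \<Rightarrow> (real \<Rightarrow> real \<times> real \<Rightarrow> real)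
     \<Rightarrow> (real \<Rightarrow> real \<times> real \<Rightarrow> real) \<Rightarrow> (real \<Rightarrow> real \<times> real \<Rightarrow> real) \<Rightarrow> bool" where
  "test_fn T \<phi> \<phi>t \<phi>\<theta> \<phi>\<Omega> \<longleftrightarrow>
     (\<forall>t\<ge>0. \<forall>x. ((\<lambda>(s, y). \<phi> s y) has_derivative
        (\<lambda>(c, a, b). \<phi>t t x * c + \<phi>\<theta> t x * a + \<phi>\<Omega> t x * b)) (at (t, x) within {0..} \<times> UNIV)) \<and>
     continuous_on ({0..} \<times> UNIV) (\<lambda>(t, x). \<phi>t t x) \<and>
     continuous_on ({0..} \<times> UNIV) (\<lambda>(t, x). \<phi>\<theta> t x) \<and>
     continuous_on ({0..} \<times> UNIV) (\<lambda>(t, x). \<phi>\<Omega> t x) \<and>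
     (\<forall>t \<theta> \<Omega>. \<phi> t (\<theta> + 2 * pi, \<Omega>) = \<phi> t (\<theta>, \<Omega>)) \<and>
     (\<exists>T' R. T' < T \<and> (\<forall>t \<theta> \<Omega>. t \<ge> T' \<or> \<bar>\<Omega>\<bar> \<ge> R \<longrightarrow> \<phi> t (\<theta>, \<Omega>) = 0))"

definition weak_sol :: "real \<Rightarrow> real \<Rightarrow> real \<Rightarrow> (real \<Rightarrow> (real \<times> real) measure)
     \<Rightarrow> (real \<times> real) measure \<Rightarrow> bool" where
  "weak_sol \<alpha> K T f f0 \<longleftrightarrow>
     bounded_mvalued f \<and>
     (\<forall>\<phi>. C0_fn \<phi> \<longrightarrow> continuous_on {0..T} (\<lambda>t. \<integral>x. \<phi> x \<partial>f t)) \<and>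
     (\<forall>\<phi> \<phi>t \<phi>\<theta> \<phi>\<Omega>. test_fn T \<phi> \<phi>t \<phi>\<theta> \<phi>\<Omega> \<longrightarrow>
        (LINT t:{0..T}|lborel. \<integral>x. \<phi>t t x \<partial>f t)
        + (LINT t:{0..T}|lborel. \<integral>x. Pfield \<alpha> K (f t) x * \<phi>\<theta> t x \<partial>f t)
        = - (\<integral>x. \<phi> 0 x \<partial>f0))"

definition empirical :: "nat \<Rightarrow> (nat \<Rightarrow> real) \<Rightarrow> (nat \<Rightarrow> real) \<Rightarrow> (real \<times> real) measure" where
  "empirical N \<theta> \<Omega> = distr (uniform_count_measure {..<N}) borel (\<lambda>i. (ang_rep (\<theta> i), \<Omega> i))"

end

theory Submission
  imports Defs
begin

text \<open>Integrating a \<open>2\<pi>\<close>-periodic function against the empirical measure \<open>\<mu>\<^sub>t\<close> gives the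
  particle average \<open>(1/N) \<Sum>\<^sub>i \<phi>(\<theta>\<^sub>i(t), \<Omega>\<^sub>i)\<close>, so every claim reduces to the chain rule along
  the \<open>N\<close> trajectories. Because \<open>h\<close> is odd and \<open>2\<pi>\<close>-periodic, the mean field \<open>P[\<mu>\<^sub>t]\<close> at
  particle \<open>i\<close> is exactly the Kuramoto velocity \<open>d\<theta>\<^sub>i/dt\<close>, and \<open>|h| \<le> 1\<close> bounds it by
  \<open>|\<Omega>\<^sub>i| + K \<parallel>h\<parallel>\<close>. This gives the derivative estimate and hence absolute continuity. The weak
  formulation is the fundamental theorem of calculus for \<open>t \<mapsto> \<integral>\<phi>(t,\<cdot>) d\<mu>\<^sub>t\<close>, which vanishes at
  \<open>t = T\<close>, and tightness holds because all particles stay in \<open>[-\<pi>,\<pi>] \<times> [-R,R]\<close> with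
  \<open>R = \<Sum>\<^sub>i |\<Omega>\<^sub>i|\<close>.\<close>

lemma ang_rep_measurable [measurable]: "ang_rep \<in> borel_measurable borel"
  unfolding ang_rep_def by measurable

lemma hker_measurable [measurable]: "hker \<alpha> \<in> borel_measurable borel"
  unfolding hker_def ang_abs_def by measurable

lemma ang_rep_bounds: "-pi < ang_rep t" "ang_rep t \<le> pi"
proof -
  define c where "c = \<lceil>(t - pi) / (2 * pi)\<rceil>"
  have "of_int c - 1 < (t - pi) / (2 * pi)" "(t - pi) / (2 * pi) \<le> of_int c"
    unfolding c_def by linarith+
  moreover have "ang_rep t = t - 2 * pi * c" unfolding ang_rep_def c_def by simp
  ultimately show "-pi < ang_rep t" "ang_rep t \<le> pi" by (auto simp: field_simps)
qed

lemma ang_rep_decomp: "\<exists>k::int. t = ang_rep t + 2 * pi * k"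
  unfolding ang_rep_def by (intro exI[of _ "\<lceil>(t - pi) / (2 * pi)\<rceil>"]) simp

lemma ang_rep_eqI:
  assumes "-pi < r" "r \<le> pi" "t = r + 2 * pi * of_int k"
  shows "ang_rep t = r"
proof -
  have "(t - pi) / (2 * pi) = of_int k + (r - pi) / (2 * pi)"
    using assms(3) by (simp add: field_simps)
  moreover have "\<lceil>(r - pi) / (2 * pi)\<rceil> = 0"
    using assms(1,2) by (simp add: ceiling_eq_iff field_simps)
  ultimately have "\<lceil>(t - pi) / (2 * pi)\<rceil> = k"
    by (simp add: add.commute[of "real_of_int k"])
  then show ?thesis unfolding ang_rep_def using assms(3) by simp
qed

lemma ang_rep_add_periods: "ang_rep (t + 2 * pi * of_int k) = ang_rep t"
proof -
  obtain m where m: "t = ang_rep t + 2 * pi * of_int m" using ang_rep_decomp by blast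
  show ?thesis
    by (rule ang_rep_eqI[of _ _ "m + k"]) (use ang_rep_bounds m in \<open>auto simp: algebra_simps\<close>)
qed

lemma periodic_fn_add_nat_periods:
  assumes "periodic_fn f"
  shows "f (\<theta> + 2 * pi * real n, \<Omega>) = f (\<theta>, \<Omega>)"
proof (induction n)
  case (Suc n)
  have "\<theta> + 2 * pi * real (Suc n) = (\<theta> + 2 * pi * real n) + 2 * pi"
    by (simp add: algebra_simps)
  with Suc assms show ?case unfolding periodic_fn_def by metis
qed simp

lemma periodic_fn_add_periods:
  assumes "periodic_fn f"
  shows "f (\<theta> + 2 * pi * of_int k, \<Omega>) = f (\<theta>, \<Omega>)"
proof (cases k)
  case (nonneg n)
  then show ?thesis using periodic_fn_add_nat_periods[OF assms, of \<theta> n] by simp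
next
  case (neg n)
  have "real_of_int k + real (Suc n) = 0" using neg by simp
  then have "(\<theta> + 2 * pi * of_int k) + 2 * pi * real (Suc n) = \<theta>"
    by (metis add.assoc add.right_neutral distrib_left mult_zero_right)
  then have "f (\<theta>, \<Omega>) = f ((\<theta> + 2 * pi * of_int k) + 2 * pi * real (Suc n), \<Omega>)"
    by (simp only:)
  also have "\<dots> = f (\<theta> + 2 * pi * of_int k, \<Omega>)"
    by (rule periodic_fn_add_nat_periods[OF assms])
  finally show ?thesis by simp
qed

lemma periodic_fn_ang_rep:
  assumes "periodic_fn f"
  shows "f (ang_rep \<theta>, \<Omega>) = f (\<theta>, \<Omega>)"
proof -
  obtain k where k: "\<theta> = ang_rep \<theta> + 2 * pi * of_int k" using ang_rep_decomp by blast
  show ?thesis using periodic_fn_add_periods[OF assms, of "ang_rep \<theta>" k \<Omega>] k[symmetric] by simp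
qed

lemma sin_ang_rep: "sin (ang_rep t) = sin t"
proof -
  obtain k where k: "t = ang_rep t + 2 * pi * of_int k" using ang_rep_decomp by blast
  have "sin (ang_rep t + 2 * pi * of_int k) = sin (ang_rep t)" by (simp add: sin_add)
  then show ?thesis using k[symmetric] by simp
qed

lemma hker_add_periods: "hker \<alpha> (t + 2 * pi * of_int k) = hker \<alpha> t"
proof -
  have "sin (t + 2 * pi * of_int k) = sin t" by (simp add: sin_add)
  then show ?thesis unfolding hker_def ang_abs_def ang_rep_add_periods by simp
qed

lemma hker_diff_ang_rep: "hker \<alpha> (t - ang_rep s) = hker \<alpha> (t - s)"
proof -
  obtain k where k: "s = ang_rep s + 2 * pi * of_int k" using ang_rep_decomp by blast
  have "t - ang_rep s = (t - s) + 2 * pi * of_int k" by (subst k) simp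
  then show ?thesis by (simp only: hker_add_periods)
qed

lemma hker_minus: "hker \<alpha> (- t) = - hker \<alpha> t"
proof (cases "ang_rep t = pi")
  case True
  then have "sin t = 0" using sin_ang_rep[of t] by simp
  then show ?thesis unfolding hker_def by simp
next
  case False
  obtain k where k: "t = ang_rep t + 2 * pi * of_int k" using ang_rep_decomp by blast
  have "ang_rep (- t) = - ang_rep t"
    by (rule ang_rep_eqI[of _ _ "- k"]) (use ang_rep_bounds[of t] False k in \<open>auto simp: algebra_simps\<close>)
  then show ?thesis unfolding hker_def ang_abs_def by simp
qed

lemma abs_hker_le_1:
  assumes "0 \<le> \<alpha>" "\<alpha> \<le> 1/2"
  shows "\<bar>hker \<alpha> t\<bar> \<le> 1"
proof (cases "ang_rep t = 0")
  case False
  define a where "a = \<bar>ang_rep t\<bar>"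
  have "a > 0" using False a_def by simp
  have sin_le: "\<bar>sin t\<bar> \<le> a"
    unfolding a_def using sin_ang_rep[of t] abs_sin_x_le_abs_x[of "ang_rep t"] by simp
  have hker_eq: "\<bar>hker \<alpha> t\<bar> = \<bar>sin t\<bar> / a powr (2 * \<alpha>)"
    unfolding hker_def ang_abs_def a_def[symmetric] using False by simp
  have "\<bar>sin t\<bar> \<le> a powr (2 * \<alpha>)"
  proof (cases "a \<ge> 1")
    case True
    then have "1 \<le> a powr (2 * \<alpha>)" using assms by (simp add: ge_one_powr_ge_zero)
    then show ?thesis using abs_sin_le_one[of t] by linarith
  next
    case False
    then have "a powr 1 \<le> a powr (2 * \<alpha>)" using assms \<open>a > 0\<close> by (intro powr_mono') auto
    then show ?thesis using sin_le \<open>a > 0\<close> by simp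
  qed
  then show ?thesis unfolding hker_eq using \<open>a > 0\<close> by (simp add: divide_le_eq)
qed (simp add: hker_def)

lemma abs_hker_le_hnorm:
  assumes "0 \<le> \<alpha>" "\<alpha> \<le> 1/2"
  shows "\<bar>hker \<alpha> t\<bar> \<le> hnorm \<alpha>"
  unfolding hnorm_def
  by (rule cSUP_upper) (use abs_hker_le_1[OF assms] in \<open>auto intro!: bdd_aboveI2\<close>)

lemma sets_empirical [simp]: "sets (empirical N \<theta> \<Omega>) = sets borel"
  and space_empirical [simp]: "space (empirical N \<theta> \<Omega>) = UNIV"
  unfolding empirical_def by simp_all

lemma integral_empirical:
  assumes "0 < N" "f \<in> borel_measurable borel"
  shows "(\<integral>x. f x \<partial>empirical N \<theta> \<Omega>) = (\<Sum>i<N. f (ang_rep (\<theta> i), \<Omega> i)) / real N"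
  unfolding empirical_def
  by (subst integral_distr) (use assms in \<open>auto simp: integral_uniform_count_measure\<close>)

lemma integral_empirical_periodic:
  assumes "0 < N" "f \<in> borel_measurable borel" "periodic_fn f"
  shows "(\<integral>x. f x \<partial>empirical N \<theta> \<Omega>) = (\<Sum>i<N. f (\<theta> i, \<Omega> i)) / real N"
  using integral_empirical[OF assms(1,2)] periodic_fn_ang_rep[OF assms(3)] by simp

lemma emeasure_empirical:
  assumes "A \<in> sets borel"
  shows "emeasure (empirical N \<theta> \<Omega>) A = card {i\<in>{..<N}. (ang_rep (\<theta> i), \<Omega> i) \<in> A} / card {..<N}"
proof -
  have "emeasure (empirical N \<theta> \<Omega>) A
      = emeasure (uniform_count_measure {..<N}) ((\<lambda>i. (ang_rep (\<theta> i), \<Omega> i)) -` A \<inter> {..<N})"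
    unfolding empirical_def using assms
    by (subst emeasure_distr) (auto simp: space_uniform_count_measure sets_uniform_count_measure)
  also have "\<dots> = card {i\<in>{..<N}. (ang_rep (\<theta> i), \<Omega> i) \<in> A} / card {..<N}"
    by (subst emeasure_uniform_count_measure) (auto intro!: arg_cong[where f=card])
  finally show ?thesis .
qed

lemma emeasure_empirical_UNIV: "0 < N \<Longrightarrow> emeasure (empirical N \<theta> \<Omega>) UNIV = 1"
  by (subst emeasure_empirical) (auto simp: divide_ennreal[symmetric] ennreal_of_nat_eq_real_of_nat)

lemma emeasure_empirical_null:
  assumes "A \<in> sets borel" "\<And>i. i < N \<Longrightarrow> (ang_rep (\<theta> i), \<Omega> i) \<notin> A"
  shows "emeasure (empirical N \<theta> \<Omega>) A = 0"
  using assms by (subst emeasure_empirical) auto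

lemma bounded_mvalued_empirical:
  assumes "0 < N"
  shows "bounded_mvalued (\<lambda>t. empirical N (\<Theta> t) \<Omega>)"
proof -
  have "torus_set \<in> sets borel" unfolding torus_set_def by (intro borel_Times) auto
  then have "UNIV - torus_set \<in> sets borel" by (metis sets.compl_sets space_borel)
  with assms show ?thesis unfolding bounded_mvalued_def
    by (auto simp: emeasure_empirical_UNIV measure_def torus_set_def ang_rep_bounds
        intro!: emeasure_empirical_null finite_measureI exI[of _ 1])
qed

lemma T_M_empirical: "T_M (\<lambda>t. empirical N (\<Theta> t) \<Omega>)"
  unfolding T_M_def
proof (intro allI impI)
  fix \<epsilon> :: real assume "\<epsilon> > 0"
  define C where "C = {-pi..pi} \<times> {-(\<Sum>i<N. \<bar>\<Omega> i\<bar>)..\<Sum>i<N. \<bar>\<Omega> i\<bar>}"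
  have "compact C" unfolding C_def by (intro compact_Times) auto
  have "measure (empirical N (\<Theta> t) \<Omega>) (UNIV - C) = 0" for t
  proof -
    have "(ang_rep (\<Theta> t i), \<Omega> i) \<in> C" if "i < N" for i
    proof -
      have "\<bar>\<Omega> i\<bar> \<le> (\<Sum>i<N. \<bar>\<Omega> i\<bar>)" using that by (intro member_le_sum) auto
      then show ?thesis unfolding C_def by (auto simp: ang_rep_bounds less_imp_le abs_le_iff)
    qed
    moreover have "UNIV - C \<in> sets borel"
      using \<open>compact C\<close> by (metis borel_closed compact_imp_closed sets.compl_sets space_borel)
    ultimately show ?thesis by (simp add: measure_def emeasure_empirical_null)
  qed
  then show "\<exists>C. compact C \<and> (\<forall>t\<ge>0. measure (empirical N (\<Theta> t) \<Omega>) (UNIV - C) \<le> \<epsilon>)"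
    using \<open>compact C\<close> \<open>\<epsilon> > 0\<close> by (intro exI[of _ C]) auto
qed

lemma Pfield_empirical:
  assumes "0 < N"
  shows "Pfield \<alpha> K (empirical N \<theta> \<Omega>) x = snd x - K * ((\<Sum>j<N. hker \<alpha> (fst x - ang_rep (\<theta> j))) / real N)"
proof -
  have "(\<lambda>y. hker \<alpha> (fst x - fst y)) \<in> borel_measurable borel"
    by (intro measurable_compose[OF _ hker_measurable] borel_measurable_continuous_onI continuous_intros)
  from integral_empirical[OF assms this] show ?thesis unfolding Pfield_def by simp
qed

lemma Pfield_empirical_measurable:
  assumes "0 < N"
  shows "Pfield \<alpha> K (empirical N \<theta> \<Omega>) \<in> borel_measurable borel"
proof -
  have "(\<lambda>x. snd x - K * ((\<Sum>j<N. hker \<alpha> (fst x - ang_rep (\<theta> j))) / real N)) \<in> borel_measurable borel"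
    unfolding borel_prod[symmetric] by measurable
  then show ?thesis by (simp add: Pfield_empirical[OF assms, abs_def])
qed

lemma periodic_fn_Pfield: "periodic_fn (Pfield \<alpha> K m)"
  unfolding periodic_fn_def Pfield_def
  using hker_add_periods[of \<alpha> "_ - _" 1] by (simp add: algebra_simps)

definition kuramoto_velocity :: "real \<Rightarrow> real \<Rightarrow> nat \<Rightarrow> (nat \<Rightarrow> real) \<Rightarrow> (nat \<Rightarrow> real) \<Rightarrow> nat \<Rightarrow> real"
  where "kuramoto_velocity \<alpha> K N \<Omega> \<theta> i = \<Omega> i + K / real N * (\<Sum>j<N. hker \<alpha> (\<theta> j - \<theta> i))"

lemma Pfield_empirical_particle:
  assumes "0 < N"
  shows "Pfield \<alpha> K (empirical N \<theta> \<Omega>) (\<theta> i, \<Omega> i) = kuramoto_velocity \<alpha> K N \<Omega> \<theta> i"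
proof -
  have "hker \<alpha> (\<theta> i - ang_rep (\<theta> j)) = - hker \<alpha> (\<theta> j - \<theta> i)" for j
    using hker_diff_ang_rep hker_minus[of \<alpha> "\<theta> j - \<theta> i"] by simp
  then show ?thesis
    by (simp add: Pfield_empirical[OF assms] kuramoto_velocity_def sum_negf)
qed

lemma abs_kuramoto_velocity_le:
  assumes "0 \<le> \<alpha>" "\<alpha> \<le> 1/2" "0 \<le> K" "0 < N"
  shows "\<bar>kuramoto_velocity \<alpha> K N \<Omega> \<theta> i\<bar> \<le> \<bar>\<Omega> i\<bar> + K * hnorm \<alpha>"
proof -
  have "\<bar>\<Sum>j<N. hker \<alpha> (\<theta> j - \<theta> i)\<bar> \<le> (\<Sum>j<N. \<bar>hker \<alpha> (\<theta> j - \<theta> i)\<bar>)"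
    by (rule sum_abs)
  also have "\<dots> \<le> (\<Sum>j<N. hnorm \<alpha>)" by (intro sum_mono abs_hker_le_hnorm assms(1,2))
  finally have "\<bar>K / real N * (\<Sum>j<N. hker \<alpha> (\<theta> j - \<theta> i))\<bar> \<le> K * hnorm \<alpha>"
    using assms(3,4) by (simp add: abs_mult field_simps mult_left_mono)
  then show ?thesis unfolding kuramoto_velocity_def by linarith
qed

lemma abs_weighted_velocity_average_le:
  assumes "0 \<le> \<alpha>" "\<alpha> \<le> 1/2" "0 \<le> K" "0 < N" and a: "\<And>i. i < N \<Longrightarrow> \<bar>a i\<bar> \<le> B"
  shows "\<bar>(\<Sum>i<N. a i * kuramoto_velocity \<alpha> K N \<Omega> \<theta> i) / real N\<bar>
    \<le> ((\<Sum>i<N. \<bar>\<Omega> i\<bar>) / real N + K * hnorm \<alpha>) * B"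
proof -
  have "\<bar>\<Sum>i<N. a i * kuramoto_velocity \<alpha> K N \<Omega> \<theta> i\<bar> \<le> (\<Sum>i<N. B * (\<bar>\<Omega> i\<bar> + K * hnorm \<alpha>))"
  proof (rule order_trans[OF sum_abs sum_mono])
    fix i assume "i \<in> {..<N}"
    then show "\<bar>a i * kuramoto_velocity \<alpha> K N \<Omega> \<theta> i\<bar> \<le> B * (\<bar>\<Omega> i\<bar> + K * hnorm \<alpha>)"
      unfolding abs_mult using a abs_kuramoto_velocity_le[OF assms(1-4)]
      by (intro mult_mono) (auto intro: order_trans[OF abs_ge_zero])
  qed
  then show ?thesis
    using assms(4) by (simp add: sum.distrib sum_distrib_left[symmetric] field_simps)
qed

lemma has_real_derivative_partial_fst_chain:
  assumes "\<And>x. (\<phi> has_derivative (\<lambda>(a, b). P x * a + Q x * b)) (at x)"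
    and "(u has_real_derivative v) (at t within S)"
  shows "((\<lambda>s. \<phi> (u s, w)) has_real_derivative P (u t, w) * v) (at t within S)"
proof -
  have "((\<lambda>s. (u s, w)) has_derivative (\<lambda>c. (c * v, 0))) (at t within S)"
    using assms(2) unfolding has_field_derivative_def
    by (auto intro!: derivative_eq_intros simp: mult.commute)
  from diff_chain_within[OF this has_derivative_at_withinI[OF assms(1)]]
  have "((\<lambda>s. \<phi> (u s, w)) has_derivative (\<lambda>c. P (u t, w) * (c * v))) (at t within S)"
    by (simp add: o_def)
  then show ?thesis unfolding has_field_derivative_def
    by (rule has_derivative_eq_rhs) (simp add: fun_eq_iff)
qed

lemma periodic_fn_partials:
  assumes d: "\<And>x. (\<phi> has_derivative (\<lambda>(a, b). P x * a + Q x * b)) (at x)"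
    and "periodic_fn \<phi>"
  shows "periodic_fn P" "periodic_fn Q"
proof -
  have "P (x + (2 * pi, 0)) = P x \<and> Q (x + (2 * pi, 0)) = Q x" for x
  proof -
    have "(\<lambda>y. \<phi> (y + (2 * pi, 0))) = \<phi>"
      using \<open>periodic_fn \<phi>\<close> by (auto simp: periodic_fn_def fun_eq_iff)
    moreover have "((\<lambda>y. \<phi> (y + (2 * pi, 0))) has_derivative
        (\<lambda>(a, b). P (x + (2 * pi, 0)) * a + Q (x + (2 * pi, 0)) * b)) (at x)"
      using diff_chain_at[OF has_derivative_add_const[OF has_derivative_ident] d]
      by (simp add: o_def)
    ultimately have "(\<lambda>(a, b). P (x + (2 * pi, 0)) * a + Q (x + (2 * pi, 0)) * b)
        = (\<lambda>(a, b). P x * a + Q x * b)"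
      using has_derivative_unique d by metis
    from fun_cong[OF this, of "(1, 0)"] fun_cong[OF this, of "(0, 1)"] show ?thesis by simp
  qed
  then show "periodic_fn P" "periodic_fn Q" unfolding periodic_fn_def by auto
qed

lemma smooth2_imp_C1_with:
  assumes "smooth2 \<phi>"
  obtains P Q where "C1_with \<phi> P Q"
proof -
  obtain P Q where d: "\<And>x. (\<phi> has_derivative (\<lambda>(a, b). P x * a + Q x * b)) (at x)"
    and "smooth2 P" "smooth2 Q"
    using assms by (cases rule: smooth2.cases) blast
  have "continuous_on UNIV f" if "smooth2 f" for f
  proof -
    obtain F G where "\<And>x. (f has_derivative (\<lambda>(a, b). F x * a + G x * b)) (at x)"
      using \<open>smooth2 f\<close> by (cases rule: smooth2.cases) blast
    then show ?thesis using has_derivative_continuous continuous_at_imp_continuous_on by blast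
  qed
  with d \<open>smooth2 P\<close> \<open>smooth2 Q\<close> show ?thesis using that unfolding C1_with_def by blast
qed

lemma C1_with_continuous: "C1_with \<phi> P Q \<Longrightarrow> continuous_on UNIV \<phi>"
  unfolding C1_with_def using has_derivative_continuous continuous_at_imp_continuous_on by blast

lemma periodic_vanishing_bounded:
  assumes "continuous_on UNIV q" "periodic_fn q" "vanish_inf q"
  obtains B where "\<And>x. \<bar>q x\<bar> \<le> B"
proof -
  obtain R where R: "\<And>\<theta> \<Omega>. \<bar>\<Omega>\<bar> \<ge> R \<Longrightarrow> \<bar>q (\<theta>, \<Omega>)\<bar> \<le> 1"
    using assms(3) unfolding vanish_inf_def by (meson zero_less_one)
  obtain B where B: "\<And>x. x \<in> {-pi..pi} \<times> {-R..R} \<Longrightarrow> norm (q x) \<le> B"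
    using continuous_on_compact_bound[of "{-pi..pi} \<times> {-R..R}" q] assms(1)
    by (metis compact_Icc compact_Times continuous_on_subset subset_UNIV)
  have "\<bar>q (\<theta>, \<Omega>)\<bar> \<le> max B 1" for \<theta> \<Omega>
  proof (cases "\<bar>\<Omega>\<bar> \<ge> R")
    case False
    then have "(ang_rep \<theta>, \<Omega>) \<in> {-pi..pi} \<times> {-R..R}"
      using ang_rep_bounds[of \<theta>] by auto
    then show ?thesis using B periodic_fn_ang_rep[OF assms(2)] by fastforce
  next
    case True
    then show ?thesis using R[OF True, of \<theta>] by linarith
  qed
  then show ?thesis using that by fastforce
qed

lemma abs_partial_le_grad_norm:
  assumes "C10_with \<phi> \<phi>\<theta> \<phi>\<Omega>"
  shows "\<bar>\<phi>\<theta> x\<bar> \<le> grad_norm \<phi>\<theta> \<phi>\<Omega>"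
proof -
  have d: "\<And>x. (\<phi> has_derivative (\<lambda>(a, b). \<phi>\<theta> x * a + \<phi>\<Omega> x * b)) (at x)"
    and "continuous_on UNIV \<phi>\<theta>" "continuous_on UNIV \<phi>\<Omega>" "periodic_fn \<phi>"
    and "vanish_inf \<phi>\<theta>" "vanish_inf \<phi>\<Omega>"
    using assms unfolding C10_with_def C1_with_def by auto
  with periodic_fn_partials[OF d] obtain B1 B2
    where B1: "\<And>x. \<bar>\<phi>\<theta> x\<bar> \<le> B1" and B2: "\<And>x. \<bar>\<phi>\<Omega> x\<bar> \<le> B2"
    by (metis periodic_vanishing_bounded)
  have "sqrt ((\<phi>\<theta> y)\<^sup>2 + (\<phi>\<Omega> y)\<^sup>2) \<le> B1 + B2" for y
    using real_sqrt_sum_squares_triangle_ineq[of "\<phi>\<theta> y" 0 0 "\<phi>\<Omega> y"] B1[of y] B2[of y] by simp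
  then have "sqrt ((\<phi>\<theta> x)\<^sup>2 + (\<phi>\<Omega> x)\<^sup>2) \<le> grad_norm \<phi>\<theta> \<phi>\<Omega>"
    unfolding grad_norm_def by (intro cSUP_upper bdd_aboveI2) auto
  with real_sqrt_ge_abs1 show ?thesis by (rule order_trans)
qed

lemma uniform_bound_finite_family:
  fixes f :: "nat \<Rightarrow> 'a::topological_space \<Rightarrow> real"
  assumes "compact S" "\<And>i. i < N \<Longrightarrow> continuous_on S (f i)"
  shows "\<exists>B. \<forall>i<N. \<forall>s\<in>S. \<bar>f i s\<bar> \<le> B"
proof -
  have "continuous_on S (\<lambda>s. \<Sum>i<N. \<bar>f i s\<bar>)"
    using assms(2) by (intro continuous_intros) auto
  then obtain B where B: "\<And>s. s \<in> S \<Longrightarrow> norm (\<Sum>i<N. \<bar>f i s\<bar>) \<le> B"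
    using continuous_on_compact_bound[OF assms(1)] by metis
  have "\<bar>f i s\<bar> \<le> B" if "i < N" "s \<in> S" for i s
  proof -
    have "\<bar>f i s\<bar> \<le> (\<Sum>i<N. \<bar>f i s\<bar>)" using \<open>i < N\<close> by (intro member_le_sum) auto
    then show ?thesis using B[OF \<open>s \<in> S\<close>] by simp
  qed
  then show ?thesis by blast
qed

lemma lipschitz_imp_abs_cont_on:
  assumes "\<And>s u. a \<le> s \<Longrightarrow> s \<le> u \<Longrightarrow> u \<le> b \<Longrightarrow> \<bar>F u - F s\<bar> \<le> L * (u - s)" "0 \<le> L"
  shows "abs_cont_on a b F"
  unfolding abs_cont_on_def
proof (intro allI impI)
  fix \<epsilon> :: real assume "\<epsilon> > 0"
  show "\<exists>\<delta>>0. \<forall>(n::nat) s u. (\<forall>k<n. a \<le> s k \<and> s k \<le> u k \<and> u k \<le> b) \<and>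
        (\<forall>k<n. \<forall>l<n. k \<noteq> l \<longrightarrow> u k \<le> s l \<or> u l \<le> s k) \<and>
        (\<Sum>k<n. u k - s k) < \<delta> \<longrightarrow> (\<Sum>k<n. \<bar>F (u k) - F (s k)\<bar>) < \<epsilon>"
  proof (intro exI[of _ "\<epsilon> / (L + 1)"] conjI allI impI)
    fix n :: nat and s u :: "nat \<Rightarrow> real"
    assume h: "(\<forall>k<n. a \<le> s k \<and> s k \<le> u k \<and> u k \<le> b) \<and>
        (\<forall>k<n. \<forall>l<n. k \<noteq> l \<longrightarrow> u k \<le> s l \<or> u l \<le> s k) \<and> (\<Sum>k<n. u k - s k) < \<epsilon> / (L + 1)"
    have "(\<Sum>k<n. \<bar>F (u k) - F (s k)\<bar>) \<le> L * (\<Sum>k<n. u k - s k)"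
      unfolding sum_distrib_left by (rule sum_mono) (use h assms(1) in auto)
    also have "\<dots> \<le> L * (\<epsilon> / (L + 1))" using h assms(2) by (intro mult_left_mono) auto
    also have "\<dots> < \<epsilon>" using assms(2) \<open>\<epsilon> > 0\<close> by (simp add: field_simps)
    finally show "(\<Sum>k<n. \<bar>F (u k) - F (s k)\<bar>) < \<epsilon>" .
  qed (use \<open>\<epsilon> > 0\<close> assms(2) in simp)
qed

lemma bounded_derivative_imp_abs_cont_on:
  assumes "a \<le> b"
    and "\<And>s. s \<in> {a..b} \<Longrightarrow> (F has_real_derivative F' s) (at s within {a..b})"
    and "\<And>s. s \<in> {a..b} \<Longrightarrow> \<bar>F' s\<bar> \<le> L"
  shows "abs_cont_on a b F"
proof (rule lipschitz_imp_abs_cont_on)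
  fix s u assume "a \<le> s" "s \<le> u" "u \<le> b"
  then show "\<bar>F u - F s\<bar> \<le> L * (u - s)"
    using field_differentiable_bound[of "{a..b}" F F' L u s] assms(2,3) by auto
next
  show "0 \<le> L" using assms(1) assms(3)[of a] by force
qed

lemma test_fn_has_derivative:
  assumes "test_fn T \<phi> \<phi>t \<phi>\<theta> \<phi>\<Omega>" "p \<in> {0..} \<times> UNIV"
  shows "((\<lambda>(s, y). \<phi> s y) has_derivative
    (\<lambda>(c, a, b). \<phi>t (fst p) (snd p) * c + \<phi>\<theta> (fst p) (snd p) * a + \<phi>\<Omega> (fst p) (snd p) * b))
    (at p within {0..} \<times> UNIV)"
  using assms unfolding test_fn_def by (cases p) auto

lemma test_fn_chain:
  assumes "test_fn T \<phi> \<phi>t \<phi>\<theta> \<phi>\<Omega>" "t \<in> S" "S \<subseteq> {0..}"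
    and "(u has_real_derivative v) (at t within S)"
  shows "((\<lambda>s. \<phi> s (u s, w)) has_real_derivative \<phi>t t (u t, w) + \<phi>\<theta> t (u t, w) * v) (at t within S)"
proof -
  have "((\<lambda>s. (s, u s, w)) has_derivative (\<lambda>c. (c, c * v, 0))) (at t within S)"
    using assms(4) unfolding has_field_derivative_def
    by (auto intro!: derivative_eq_intros simp: mult.commute)
  from has_derivative_in_compose2[OF test_fn_has_derivative[OF assms(1)] _ assms(2) this]
  have "((\<lambda>s. \<phi> s (u s, w)) has_derivative
      (\<lambda>c. \<phi>t t (u t, w) * c + \<phi>\<theta> t (u t, w) * (c * v))) (at t within S)"
    using assms(3) by auto
  then show ?thesis unfolding has_field_derivative_def
    by (rule has_derivative_eq_rhs) (simp add: fun_eq_iff algebra_simps)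
qed

lemma test_fn_space_derivative:
  assumes "test_fn T \<phi> \<phi>t \<phi>\<theta> \<phi>\<Omega>" "0 \<le> t"
  shows "(\<phi> t has_derivative (\<lambda>(a, b). \<phi>\<theta> t y * a + \<phi>\<Omega> t y * b)) (at y)"
proof -
  have "((\<lambda>y. (t, y)) has_derivative (\<lambda>v. (0, v))) (at y)"
    by (auto intro!: derivative_eq_intros)
  from has_derivative_in_compose2[OF test_fn_has_derivative[OF assms(1)] _ _ this]
  have "((\<lambda>y. \<phi> t y) has_derivative (\<lambda>v. \<phi>\<theta> t y * fst v + \<phi>\<Omega> t y * snd v)) (at y)"
    using assms(2) by (auto simp: case_prod_beta)
  then show ?thesis by (rule has_derivative_eq_rhs) (simp add: fun_eq_iff)
qed

lemma test_fn_periodic: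
  assumes tf: "test_fn T \<phi> \<phi>t \<phi>\<theta> \<phi>\<Omega>" and "0 \<le> t"
  shows "periodic_fn (\<phi> t)" "periodic_fn (\<phi>\<theta> t)" "periodic_fn (\<phi>t t)"
proof -
  show per: "periodic_fn (\<phi> t)" using tf unfolding test_fn_def periodic_fn_def by auto
  show "periodic_fn (\<phi>\<theta> t)" by (rule periodic_fn_partials(1)[OF test_fn_space_derivative[OF assms] per])
  have "at_right t \<le> at t within {0..}" using \<open>0 \<le> t\<close> by (intro at_le) auto
  then have "at t within {0..} \<noteq> bot" using trivial_limit_at_right_real[of t] by (auto simp: bot_unique)
  moreover have "((\<lambda>s. \<phi> s (\<theta>, \<Omega>)) has_real_derivative \<phi>t t (\<theta>, \<Omega>)) (at t within {0..})" for \<theta> \<Omega>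
    using test_fn_chain[OF tf _ _ DERIV_const, of t "{0..}" \<theta> \<Omega>] \<open>0 \<le> t\<close> by simp
  moreover have "(\<lambda>s. \<phi> s (\<theta> + 2 * pi, \<Omega>)) = (\<lambda>s. \<phi> s (\<theta>, \<Omega>))" for \<theta> \<Omega>
    using tf unfolding test_fn_def by auto
  ultimately show "periodic_fn (\<phi>t t)"
    unfolding periodic_fn_def by (metis has_field_derivative_unique)
qed

lemma test_fn_continuous:
  assumes tf: "test_fn T \<phi> \<phi>t \<phi>\<theta> \<phi>\<Omega>" and "0 \<le> t"
  shows "continuous_on UNIV (\<phi> t)" "continuous_on UNIV (\<phi>t t)" "continuous_on UNIV (\<phi>\<theta> t)"
proof -
  show "continuous_on UNIV (\<phi> t)"
    using test_fn_space_derivative[OF assms] has_derivative_continuous continuous_at_imp_continuous_on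
    by blast
  have slice: "continuous_on UNIV (F t)" if "continuous_on ({0..} \<times> UNIV) (\<lambda>(t, x). F t x)"
    for F :: "real \<Rightarrow> real \<times> real \<Rightarrow> real"
  proof -
    have "continuous_on UNIV (\<lambda>x. (t, x))" by (intro continuous_intros)
    then have "continuous_on UNIV (\<lambda>x. (\<lambda>(t, x). F t x) (t, x))"
      by (rule continuous_on_compose2[OF that]) (use \<open>0 \<le> t\<close> in auto)
    then show ?thesis by simp
  qed
  from tf show "continuous_on UNIV (\<phi>t t)" "continuous_on UNIV (\<phi>\<theta> t)"
    unfolding test_fn_def by (auto intro: slice)
qed

locale kuramoto_particles =
  fixes \<alpha> K :: real and N :: nat and \<Omega> :: "nat \<Rightarrow> real" and \<Theta> :: "real \<Rightarrow> nat \<Rightarrow> real"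
  assumes alpha_nonneg: "0 \<le> \<alpha>" and alpha_le_half: "\<alpha> \<le> 1/2"
    and K_nonneg: "0 \<le> K" and N_pos: "0 < N"
    and trajectory_derivative: "\<And>i t. i < N \<Longrightarrow> 0 \<le> t \<Longrightarrow>
      ((\<lambda>s. \<Theta> s i) has_real_derivative kuramoto_velocity \<alpha> K N \<Omega> (\<Theta> t) i) (at t within {0..})"
begin

abbreviation velocity :: "real \<Rightarrow> nat \<Rightarrow> real"
  where "velocity t i \<equiv> kuramoto_velocity \<alpha> K N \<Omega> (\<Theta> t) i"

abbreviation particle_measure :: "real \<Rightarrow> (real \<times> real) measure"
  where "particle_measure t \<equiv> empirical N (\<Theta> t) \<Omega>"

lemma trajectory_derivative_within:
  "i < N \<Longrightarrow> t \<in> S \<Longrightarrow> S \<subseteq> {0..} \<Longrightarrow>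
    ((\<lambda>s. \<Theta> s i) has_real_derivative velocity t i) (at t within S)"
  using trajectory_derivative DERIV_subset by blast

lemma trajectory_continuous: "i < N \<Longrightarrow> continuous_on {0..} (\<lambda>s. \<Theta> s i)"
  unfolding continuous_on_eq_continuous_within using trajectory_derivative DERIV_continuous by fastforce

lemma continuous_on_along_trajectory:
  assumes "continuous_on UNIV \<phi>" "i < N"
  shows "continuous_on {0..} (\<lambda>s. \<phi> (\<Theta> s i, \<Omega> i))"
  using trajectory_continuous[OF assms(2)]
  by (intro continuous_on_compose2[OF assms(1)] continuous_intros) auto

lemma continuous_on_along_trajectory_time:
  assumes "continuous_on ({0..} \<times> UNIV) (\<lambda>(t, x). F t x)" "i < N"
  shows "continuous_on {0..} (\<lambda>s. F s (\<Theta> s i, \<Omega> i))"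
proof -
  have "continuous_on {0..} (\<lambda>s. (s, \<Theta> s i, \<Omega> i))"
    using trajectory_continuous[OF assms(2)] by (intro continuous_intros)
  then have "continuous_on {0..} (\<lambda>s. (\<lambda>(t, x). F t x) (s, \<Theta> s i, \<Omega> i))"
    by (rule continuous_on_compose2[OF assms(1)]) auto
  then show ?thesis by simp
qed

lemma particle_average_derivative:
  assumes "\<And>x. (\<phi> has_derivative (\<lambda>(a, b). P x * a + Q x * b)) (at x)" "t \<in> S" "S \<subseteq> {0..}"
  shows "((\<lambda>s. (\<Sum>i<N. \<phi> (\<Theta> s i, \<Omega> i)) / real N) has_real_derivative
    (\<Sum>i<N. P (\<Theta> t i, \<Omega> i) * velocity t i) / real N) (at t within S)"
  using assms
  by (intro DERIV_cdivide DERIV_sum has_real_derivative_partial_fst_chain trajectory_derivative_within)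
     auto

lemma particle_average_test_fn_derivative:
  assumes "test_fn T \<phi> \<phi>t \<phi>\<theta> \<phi>\<Omega>" "t \<in> S" "S \<subseteq> {0..}"
  shows "((\<lambda>s. (\<Sum>i<N. \<phi> s (\<Theta> s i, \<Omega> i)) / real N) has_real_derivative
    (\<Sum>i<N. \<phi>t t (\<Theta> t i, \<Omega> i) + \<phi>\<theta> t (\<Theta> t i, \<Omega> i) * velocity t i) / real N) (at t within S)"
  using assms
  by (intro DERIV_cdivide DERIV_sum test_fn_chain trajectory_derivative_within) auto

lemma integral_particle_measure:
  assumes "continuous_on UNIV \<phi>" "periodic_fn \<phi>"
  shows "(\<integral>x. \<phi> x \<partial>particle_measure t) = (\<Sum>i<N. \<phi> (\<Theta> t i, \<Omega> i)) / real N"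
  using N_pos assms by (intro integral_empirical_periodic borel_measurable_continuous_onI)

lemma continuous_on_particle_integral:
  assumes "continuous_on UNIV \<phi>" "periodic_fn \<phi>"
  shows "continuous_on {0..} (\<lambda>t. \<integral>x. \<phi> x \<partial>particle_measure t)"
  unfolding integral_particle_measure[OF assms]
  using continuous_on_along_trajectory[OF assms(1)] N_pos by (intro continuous_intros) auto

lemma empirical_integral_derivative_bound:
  assumes "C10_with \<phi> \<phi>\<theta> \<phi>\<Omega>" "0 \<le> t"
  shows "\<exists>D. ((\<lambda>s. \<integral>x. \<phi> x \<partial>particle_measure s) has_real_derivative D) (at t within {0..}) \<and>
    \<bar>D\<bar> \<le> ((\<Sum>i<N. \<bar>\<Omega> i\<bar>) / real N + K * hnorm \<alpha>) * grad_norm \<phi>\<theta> \<phi>\<Omega>"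
proof -
  have C1: "C1_with \<phi> \<phi>\<theta> \<phi>\<Omega>" and "periodic_fn \<phi>"
    using assms(1) unfolding C10_with_def by auto
  have "((\<lambda>s. \<integral>x. \<phi> x \<partial>particle_measure s) has_real_derivative
      (\<Sum>i<N. \<phi>\<theta> (\<Theta> t i, \<Omega> i) * velocity t i) / real N) (at t within {0..})"
    unfolding integral_particle_measure[OF C1_with_continuous[OF C1] \<open>periodic_fn \<phi>\<close>]
    using C1 assms(2) unfolding C1_with_def
    by (intro particle_average_derivative[of \<phi> \<phi>\<theta> \<phi>\<Omega>]) auto
  moreover have "\<bar>(\<Sum>i<N. \<phi>\<theta> (\<Theta> t i, \<Omega> i) * velocity t i) / real N\<bar>
      \<le> ((\<Sum>i<N. \<bar>\<Omega> i\<bar>) / real N + K * hnorm \<alpha>) * grad_norm \<phi>\<theta> \<phi>\<Omega>"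
    by (intro abs_weighted_velocity_average_le alpha_nonneg alpha_le_half K_nonneg N_pos
        abs_partial_le_grad_norm[OF assms(1)])
  ultimately show ?thesis by blast
qed

lemma AC_M_particle_measure: "AC_M particle_measure"
  unfolding AC_M_def
proof (intro conjI allI impI)
  show "bounded_mvalued particle_measure" by (rule bounded_mvalued_empirical[OF N_pos])
  fix \<phi> and T :: real assume "Cc_inf \<phi>" "0 \<le> T"
  then have "smooth2 \<phi>" "periodic_fn \<phi>" unfolding Cc_inf_def by auto
  from \<open>smooth2 \<phi>\<close> obtain P Q where C1: "C1_with \<phi> P Q" by (rule smooth2_imp_C1_with)
  then have "continuous_on UNIV P" unfolding C1_with_def by blast
  have cont: "continuous_on {0..T} (\<lambda>s. P (\<Theta> s i, \<Omega> i))" if "i < N" for i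
    by (rule continuous_on_subset[OF continuous_on_along_trajectory[OF \<open>continuous_on UNIV P\<close> that]])
       auto
  obtain B where B: "\<forall>i<N. \<forall>s\<in>{0..T}. \<bar>P (\<Theta> s i, \<Omega> i)\<bar> \<le> B"
    using uniform_bound_finite_family[of "{0..T}" N "\<lambda>i s. P (\<Theta> s i, \<Omega> i)", OF compact_Icc cont] by auto
  have "abs_cont_on 0 T (\<lambda>s. (\<Sum>i<N. \<phi> (\<Theta> s i, \<Omega> i)) / real N)"
  proof (rule bounded_derivative_imp_abs_cont_on[OF \<open>0 \<le> T\<close>])
    fix s assume "s \<in> {0..T}"
    then show "((\<lambda>s. (\<Sum>i<N. \<phi> (\<Theta> s i, \<Omega> i)) / real N) has_real_derivative
        (\<Sum>i<N. P (\<Theta> s i, \<Omega> i) * velocity s i) / real N) (at s within {0..T})"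
      using C1 unfolding C1_with_def by (intro particle_average_derivative[of \<phi> P Q]) auto
    show "\<bar>(\<Sum>i<N. P (\<Theta> s i, \<Omega> i) * velocity s i) / real N\<bar>
        \<le> ((\<Sum>i<N. \<bar>\<Omega> i\<bar>) / real N + K * hnorm \<alpha>) * B"
      using B \<open>s \<in> {0..T}\<close>
      by (intro abs_weighted_velocity_average_le alpha_nonneg alpha_le_half K_nonneg N_pos) auto
  qed
  then show "abs_cont_on 0 T (\<lambda>t. \<integral>x. \<phi> x \<partial>particle_measure t)"
    unfolding integral_particle_measure[OF C1_with_continuous[OF C1] \<open>periodic_fn \<phi>\<close>] .
qed

lemma test_fn_particle_average_has_integral:
  assumes tf: "test_fn T \<phi> \<phi>t \<phi>\<theta> \<phi>\<Omega>" and "0 < T"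
  shows "((\<lambda>s. (\<Sum>i<N. \<phi>t s (\<Theta> s i, \<Omega> i) + \<phi>\<theta> s (\<Theta> s i, \<Omega> i) * velocity s i) / real N)
    has_integral - (\<integral>x. \<phi> 0 x \<partial>particle_measure 0)) {0..T}"
proof -
  define G where "G s = (\<Sum>i<N. \<phi> s (\<Theta> s i, \<Omega> i)) / real N" for s
  have "((\<lambda>s. (\<Sum>i<N. \<phi>t s (\<Theta> s i, \<Omega> i) + \<phi>\<theta> s (\<Theta> s i, \<Omega> i) * velocity s i) / real N)
      has_integral G T - G 0) {0..T}"
    using \<open>0 < T\<close> unfolding G_def
    by (intro fundamental_theorem_of_calculus)
       (auto simp: has_real_derivative_iff_has_vector_derivative[symmetric]
         intro!: particle_average_test_fn_derivative[OF tf])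
  moreover have "G T = 0"
  proof -
    obtain T' R where "T' < T" "\<forall>t \<theta> \<Omega>. t \<ge> T' \<or> \<bar>\<Omega>\<bar> \<ge> R \<longrightarrow> \<phi> t (\<theta>, \<Omega>) = 0"
      using tf unfolding test_fn_def by blast
    then show ?thesis unfolding G_def by simp
  qed
  moreover have "G 0 = (\<integral>x. \<phi> 0 x \<partial>particle_measure 0)"
    unfolding G_def
    by (rule integral_particle_measure[symmetric])
       (use test_fn_continuous[OF tf] test_fn_periodic[OF tf] in auto)
  ultimately show ?thesis by simp
qed

lemma integral_test_fn_time_derivative:
  assumes "test_fn T \<phi> \<phi>t \<phi>\<theta> \<phi>\<Omega>" "0 \<le> s"
  shows "(\<integral>x. \<phi>t s x \<partial>particle_measure s) = (\<Sum>i<N. \<phi>t s (\<Theta> s i, \<Omega> i)) / real N"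
  by (rule integral_particle_measure) (use test_fn_continuous[OF assms] test_fn_periodic[OF assms] in auto)

lemma integral_Pfield_test_fn:
  assumes "test_fn T \<phi> \<phi>t \<phi>\<theta> \<phi>\<Omega>" "0 \<le> s"
  shows "(\<integral>x. Pfield \<alpha> K (particle_measure s) x * \<phi>\<theta> s x \<partial>particle_measure s)
    = (\<Sum>i<N. \<phi>\<theta> s (\<Theta> s i, \<Omega> i) * velocity s i) / real N"
proof -
  have "periodic_fn (\<lambda>x. Pfield \<alpha> K (particle_measure s) x * \<phi>\<theta> s x)"
    using periodic_fn_Pfield test_fn_periodic(2)[OF assms] by (simp add: periodic_fn_def)
  moreover have "(\<lambda>x. Pfield \<alpha> K (particle_measure s) x * \<phi>\<theta> s x) \<in> borel_measurable borel"
    using Pfield_empirical_measurable[OF N_pos]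
      borel_measurable_continuous_onI[OF test_fn_continuous(3)[OF assms]]
    by (rule borel_measurable_times)
  ultimately show ?thesis
    by (simp add: integral_empirical_periodic[OF N_pos] Pfield_empirical_particle[OF N_pos] mult.commute)
qed

lemma set_integrable_particle_average:
  assumes "continuous_on ({0..} \<times> UNIV) (\<lambda>(t, x). F t x)"
  shows "set_integrable lborel {0..T} (\<lambda>s. (\<Sum>i<N. F s (\<Theta> s i, \<Omega> i)) / real N)"
proof -
  have "continuous_on {0..T} (\<lambda>s. F s (\<Theta> s i, \<Omega> i))" if "i < N" for i
    by (rule continuous_on_subset[OF continuous_on_along_trajectory_time[OF assms that]]) auto
  then have "continuous_on {0..T} (\<lambda>s. (\<Sum>i<N. F s (\<Theta> s i, \<Omega> i)) / real N)"
    using N_pos by (intro continuous_intros) auto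
  then show ?thesis unfolding set_integrable_def by (rule borel_integrable_compact[OF compact_Icc])
qed

lemma set_borel_measurable_particle_transport:
  assumes "continuous_on ({0..} \<times> UNIV) (\<lambda>(t, x). F t x)"
  shows "set_borel_measurable lborel {0..T} (\<lambda>s. (\<Sum>i<N. F s (\<Theta> s i, \<Omega> i) * velocity s i) / real N)"
proof -
  let ?p = "\<lambda>s. (\<Sum>i<N. F s (\<Theta> s i, \<Omega> i) * velocity s i) / real N"
  have extend: "(\<lambda>s. g (max 0 s)) \<in> borel_measurable borel" if "continuous_on {0..} g" for g :: "real \<Rightarrow> real"
  proof (rule borel_measurable_continuous_onI)
    show "continuous_on UNIV (\<lambda>s. g (max 0 s))"
      by (rule continuous_on_compose2[OF that]) (auto intro: continuous_on_max continuous_on_id)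
  qed
  have max_measurable: "(\<lambda>s. ?p (max 0 s)) \<in> borel_measurable borel"
    unfolding kuramoto_velocity_def
  proof (intro borel_measurable_divide borel_measurable_sum borel_measurable_times borel_measurable_add
      borel_measurable_const)
    fix i j assume "i \<in> {..<N}" "j \<in> {..<N}"
    then have "continuous_on {0..} (\<lambda>s. \<Theta> s j - \<Theta> s i)"
      using trajectory_continuous by (intro continuous_intros) auto
    from extend[OF this]
    show "(\<lambda>s. hker \<alpha> (\<Theta> (max 0 s) j - \<Theta> (max 0 s) i)) \<in> borel_measurable borel"
      by (rule measurable_compose[OF _ hker_measurable])
  next
    fix i assume "i \<in> {..<N}"
    then show "(\<lambda>s. F (max 0 s) (\<Theta> (max 0 s) i, \<Omega> i)) \<in> borel_measurable borel"
      using extend[OF continuous_on_along_trajectory_time[OF assms]] by simp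
  qed
  then have "(\<lambda>s. indicator {0..T} s *\<^sub>R ?p (max 0 s)) \<in> borel_measurable borel"
    by (intro borel_measurable_scaleR borel_measurable_indicator) auto
  moreover have "(\<lambda>s. indicator {0..T} s *\<^sub>R ?p s) = (\<lambda>s. indicator {0..T} s *\<^sub>R ?p (max 0 s))"
    by (auto simp: fun_eq_iff indicator_def)
  ultimately show ?thesis unfolding set_borel_measurable_def by simp
qed

lemma set_integrable_particle_transport:
  assumes "continuous_on ({0..} \<times> UNIV) (\<lambda>(t, x). F t x)"
  shows "set_integrable lborel {0..T} (\<lambda>s. (\<Sum>i<N. F s (\<Theta> s i, \<Omega> i) * velocity s i) / real N)"
proof -
  have cont: "continuous_on {0..T} (\<lambda>s. F s (\<Theta> s i, \<Omega> i))" if "i < N" for i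
    by (rule continuous_on_subset[OF continuous_on_along_trajectory_time[OF assms that]]) auto
  obtain B where B: "\<forall>i<N. \<forall>s\<in>{0..T}. \<bar>F s (\<Theta> s i, \<Omega> i)\<bar> \<le> B"
    using uniform_bound_finite_family[of "{0..T}" N "\<lambda>i s. F s (\<Theta> s i, \<Omega> i)", OF compact_Icc cont] by auto
  define C where "C = ((\<Sum>i<N. \<bar>\<Omega> i\<bar>) / real N + K * hnorm \<alpha>) * B"
  show ?thesis
  proof (rule set_integrable_bound[where f = "\<lambda>_. C"])
    show "set_integrable lborel {0..T} (\<lambda>_. C)"
      unfolding set_integrable_def by (rule borel_integrable_compact) auto
    show "set_borel_measurable lborel {0..T} (\<lambda>s. (\<Sum>i<N. F s (\<Theta> s i, \<Omega> i) * velocity s i) / real N)"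
      by (rule set_borel_measurable_particle_transport[OF assms])
    have "\<bar>(\<Sum>i<N. F s (\<Theta> s i, \<Omega> i) * velocity s i) / real N\<bar> \<le> \<bar>C\<bar>" if "s \<in> {0..T}" for s
    proof -
      have "\<bar>(\<Sum>i<N. F s (\<Theta> s i, \<Omega> i) * velocity s i) / real N\<bar> \<le> C"
        unfolding C_def using B that
        by (intro abs_weighted_velocity_average_le alpha_nonneg alpha_le_half K_nonneg N_pos) auto
      then show ?thesis by linarith
    qed
    then show "AE s in lborel. s \<in> {0..T} \<longrightarrow>
        norm ((\<Sum>i<N. F s (\<Theta> s i, \<Omega> i) * velocity s i) / real N) \<le> norm C"
      by (intro AE_I2) simp
  qed
qed

lemma weak_formulation_particle_measure:
  assumes tf: "test_fn T \<phi> \<phi>t \<phi>\<theta> \<phi>\<Omega>" and "0 < T"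
  shows "(LINT t:{0..T}|lborel. \<integral>x. \<phi>t t x \<partial>particle_measure t)
    + (LINT t:{0..T}|lborel. \<integral>x. Pfield \<alpha> K (particle_measure t) x * \<phi>\<theta> t x \<partial>particle_measure t)
    = - (\<integral>x. \<phi> 0 x \<partial>particle_measure 0)"
proof -
  define p1 where "p1 s = (\<Sum>i<N. \<phi>t s (\<Theta> s i, \<Omega> i)) / real N" for s
  define p2 where "p2 s = (\<Sum>i<N. \<phi>\<theta> s (\<Theta> s i, \<Omega> i) * velocity s i) / real N" for s
  have "continuous_on ({0..} \<times> UNIV) (\<lambda>(t, x). \<phi>t t x)"
    and "continuous_on ({0..} \<times> UNIV) (\<lambda>(t, x). \<phi>\<theta> t x)"
    using tf unfolding test_fn_def by auto
  then have p1: "set_integrable lborel {0..T} p1" and p2: "set_integrable lborel {0..T} p2"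
    unfolding p1_def[abs_def] p2_def[abs_def]
    by (simp_all add: set_integrable_particle_average set_integrable_particle_transport)
  have "(LINT t:{0..T}|lborel. \<integral>x. \<phi>t t x \<partial>particle_measure t) = (LINT t:{0..T}|lborel. p1 t)"
    by (rule set_lebesgue_integral_cong) (auto simp: p1_def integral_test_fn_time_derivative[OF tf])
  moreover have "(LINT t:{0..T}|lborel. \<integral>x. Pfield \<alpha> K (particle_measure t) x * \<phi>\<theta> t x \<partial>particle_measure t)
      = (LINT t:{0..T}|lborel. p2 t)"
    by (rule set_lebesgue_integral_cong) (auto simp: p2_def integral_Pfield_test_fn[OF tf])
  moreover have "(LINT t:{0..T}|lborel. p1 t) + (LINT t:{0..T}|lborel. p2 t) = integral {0..T} (\<lambda>t. p1 t + p2 t)"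
    using set_integral_add(2)[OF p1 p2] set_borel_integral_eq_integral(2)[OF set_integral_add(1)[OF p1 p2]]
    by simp
  moreover have "integral {0..T} (\<lambda>t. p1 t + p2 t) = - (\<integral>x. \<phi> 0 x \<partial>particle_measure 0)"
    using integral_unique[OF test_fn_particle_average_has_integral[OF tf \<open>0 < T\<close>]]
    by (simp add: p1_def p2_def sum.distrib add_divide_distrib)
  ultimately show ?thesis by simp
qed

lemma weak_sol_particle_measure:
  assumes "0 < T"
  shows "weak_sol \<alpha> K T particle_measure (particle_measure 0)"
  unfolding weak_sol_def
proof (intro conjI allI impI)
  fix \<phi> assume "C0_fn \<phi>"
  then show "continuous_on {0..T} (\<lambda>t. \<integral>x. \<phi> x \<partial>particle_measure t)"
    unfolding C0_fn_def by (intro continuous_on_subset[OF continuous_on_particle_integral]) auto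
qed (auto intro: bounded_mvalued_empirical[OF N_pos] weak_formulation_particle_measure assms)

end

theorem mainTheorem19:
  fixes \<alpha> K :: real and N :: nat
    and \<theta>0 \<Omega> :: "nat \<Rightarrow> real" and \<Theta> :: "real \<Rightarrow> nat \<Rightarrow> real"
  assumes "0 < \<alpha>" "\<alpha> < 1/2" "0 < K" "0 < N"
    and "\<forall>i<N. \<Theta> 0 i = \<theta>0 i"
    and "\<forall>i<N. \<forall>t\<ge>0. ((\<lambda>s. \<Theta> s i) has_real_derivative
            (\<Omega> i + K / real N * (\<Sum>j<N. hker \<alpha> (\<Theta> t j - \<Theta> t i)))) (at t within {0..})"
  defines "\<mu> \<equiv> (\<lambda>t. empirical N (\<Theta> t) \<Omega>)"
  shows "AC_M \<mu> \<and> T_M \<mu> \<and> (\<forall>T>0. weak_sol \<alpha> K T \<mu> (\<mu> 0)) \<and>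
    (\<forall>\<phi> \<phi>\<theta> \<phi>\<Omega>. C10_with \<phi> \<phi>\<theta> \<phi>\<Omega> \<longrightarrow>
       (\<forall>t\<ge>0. \<exists>D. ((\<lambda>s. \<integral>x. \<phi> x \<partial>\<mu> s) has_real_derivative D) (at t within {0..}) \<and>
          \<bar>D\<bar> \<le> ((\<Sum>i<N. \<bar>\<Omega> i\<bar>) / real N + K * hnorm \<alpha>) * grad_norm \<phi>\<theta> \<phi>\<Omega>))"
proof -
  interpret kuramoto_particles \<alpha> K N \<Omega> \<Theta>
    using assms(1-4,6) by unfold_locales (auto simp: kuramoto_velocity_def)
  show ?thesis
    unfolding \<mu>_def
    by (intro conjI allI impI AC_M_particle_measure T_M_empirical weak_sol_particle_measure
        empirical_integral_derivative_bound)
qed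

end
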